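(* Let $K$ be a field with an absolute value $v$, and let $\mathbb{C}_v$ denote the completion of an algebraic closure of $K$. Let $\phi(z)\in K[z]$ be a polynomial of degree $d\geq 2$ with associated local canonical height $\hat{\lambda}_{v,\phi}$. Let $\gamma\in\mathbb{C}_v^{\times}$ and define $\psi(z)=\gamma\,\phi(\gamma^{-1}z)\in\mathbb{C}_v[z]$. Write $\psi(z)=b_d z^d+\cdots+b_0=b_d(z-\beta_1)\cdots(z-\beta_d)$ with $b_d\neq 0$, $\beta_i\in\mathbb{C}_v$, let $A=\max_i|\beta_i|_v$, $B=|b_d|_v^{-1/d}$, and let $c_v=\max\{1,A,B\}$, $C_v=\max\{1,|b_0|_v,\ldots,|b_d|_v\}$ if $v$ is non-archimedean, and $c_v=\max\{1,A+B\}$, $C_v=\max\{1,|b_0|_v+\cdots+|b_d|_v\}$ if $v$ is archimedean. Then for all $x\in\mathbb{C}_v$, $$\frac{-d\log c_v}{d-1}\leq \hat{\lambda}_{v,\phi}(x)-\lambda_v(\gamma x)\leq\frac{\log C_v}{d-1}.$$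
   Context: The standard local height is $\lambda_v(x)=\log\max\{1,|x|_v\}$ for $x\in\mathbb{C}_v$. For a polynomial $f$ with coefficients in $\mathbb{C}_v$ of degree $d\geq 2$, the local canonical height is $\hat{\lambda}_{v,f}(x)=\lim_{n\to\infty}d^{-n}\lambda_v(f^n(x))$ (this limit exists), where $f^n$ is the $n$-th iterate of $f$. *)

theory Defs
  imports "HOL-Computational_Algebra.Polynomial" Complex_Main
begin

definition abs_value :: "('a::field \<Rightarrow> real) \<Rightarrow> bool" where
  "abs_value v \<longleftrightarrow> (\<forall>x. 0 \<le> v x) \<and> (\<forall>x. v x = 0 \<longleftrightarrow> x = 0)
     \<and> (\<forall>x y. v (x * y) = v x * v y) \<and> (\<forall>x y. v (x + y) \<le> v x + v y)"

definition non_archimedean :: "('a::field \<Rightarrow> real) \<Rightarrow> bool" where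
  "non_archimedean v \<longleftrightarrow> (\<forall>x y. v (x + y) \<le> max (v x) (v y))"

definition alg_closed_field :: "'a::field itself \<Rightarrow> bool" where
  "alg_closed_field _ \<longleftrightarrow> (\<forall>p::'a poly. 0 < degree p \<longrightarrow> (\<exists>x. poly p x = 0))"

definition v_complete :: "('a::field \<Rightarrow> real) \<Rightarrow> bool" where
  "v_complete v \<longleftrightarrow> (\<forall>s::nat \<Rightarrow> 'a.
      (\<forall>e>0. \<exists>N. \<forall>m\<ge>N. \<forall>n\<ge>N. v (s m - s n) < e) \<longrightarrow>
      (\<exists>L. \<forall>e>0. \<exists>N. \<forall>n\<ge>N. v (s n - L) < e))"

definition is_subfield :: "'a::field set \<Rightarrow> bool" where
  "is_subfield K \<longleftrightarrow> 0 \<in> K \<and> 1 \<in> K \<and> (\<forall>x\<in>K. \<forall>y\<in>K. x + y \<in> K \<and> x - y \<in> K \<and> x * y \<in> K)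
     \<and> (\<forall>x\<in>K. inverse x \<in> K)"

definition algebraic_over :: "'a::field set \<Rightarrow> 'a \<Rightarrow> bool" where
  "algebraic_over K x \<longleftrightarrow> (\<exists>p. p \<noteq> 0 \<and> (\<forall>i. coeff p i \<in> K) \<and> poly p x = 0)"

text \<open>C is (isomorphic to) the completion of an algebraic closure of K:
  a complete algebraically closed valued field in which the elements algebraic over K are dense.\<close>
definition completion_of_alg_closure :: "'a::field set \<Rightarrow> ('a \<Rightarrow> real) \<Rightarrow> bool" where
  "completion_of_alg_closure K v \<longleftrightarrow> is_subfield K \<and> abs_value v \<and> alg_closed_field TYPE('a)
     \<and> v_complete v \<and> (\<forall>x. \<forall>e>0. \<exists>y. algebraic_over K y \<and> v (x - y) < e)"

definition loc_height :: "('a \<Rightarrow> real) \<Rightarrow> 'a \<Rightarrow> real" where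
  "loc_height v x = ln (max 1 (v x))"

definition canon_height :: "('a::comm_ring \<Rightarrow> real) \<Rightarrow> 'a poly \<Rightarrow> 'a \<Rightarrow> real" where
  "canon_height v f x = lim (\<lambda>n. loc_height v ((poly f ^^ n) x) / real (degree f) ^ n)"

end

theory Submission imports Defs begin

text \<open>Since \<open>\<psi>(\<gamma> y) = \<gamma> \<phi>(y)\<close>, the function \<open>h(y) = \<lambda>\<^sub>v(\<gamma> y)\<close> satisfies
  \<open>d h(y) - d log c\<^sub>v \<le> h(\<phi>(y)) \<le> d h(y) + log C\<^sub>v\<close>: the upper bound estimates \<open>\<psi>\<close> term by term,
  and for the lower bound the factorisation \<open>\<psi>(z) = b\<^sub>d \<Prod> (z - \<beta>\<^sub>i)\<close> shows that outside the disc of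
  radius \<open>c\<^sub>v\<close> every factor satisfies \<open>c\<^sub>v |z - \<beta>\<^sub>i| \<ge> B |z|\<close>.
  Tate's telescoping argument writes \<open>d\<^sup>-\<^sup>n h(\<phi>\<^sup>n(x)) - h(x)\<close> as a sum of these errors divided by
  \<open>d\<^sup>k\<^sup>+\<^sup>1\<close>, so the limit exists and differs from \<open>h(x)\<close> by at most the sum of a geometric series.
  Finally \<open>h\<close> and \<open>\<lambda>\<^sub>v\<close> differ by a bounded amount, which does not change the limit.\<close>

lemma abs_value_nonneg: "abs_value v \<Longrightarrow> 0 \<le> v x"
  and abs_value_eq_0_iff: "abs_value v \<Longrightarrow> v x = 0 \<longleftrightarrow> x = 0"
  and abs_value_mult: "abs_value v \<Longrightarrow> v (x * y) = v x * v y"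
  and abs_value_triangle: "abs_value v \<Longrightarrow> v (x + y) \<le> v x + v y"
  by (simp_all add: abs_value_def)

lemma abs_value_0: "abs_value v \<Longrightarrow> v 0 = 0"
  by (simp add: abs_value_eq_0_iff)

lemma abs_value_pos: "abs_value v \<Longrightarrow> x \<noteq> 0 \<Longrightarrow> 0 < v x"
  using abs_value_nonneg abs_value_eq_0_iff by (metis less_eq_real_def)

lemma abs_value_1: "abs_value v \<Longrightarrow> v 1 = 1"
  using abs_value_mult[of v 1 1] abs_value_eq_0_iff[of v 1] by simp

lemma abs_value_power: "abs_value v \<Longrightarrow> v (x ^ n) = v x ^ n"
  by (induction n) (simp_all add: abs_value_1 abs_value_mult)

lemma abs_value_prod: "abs_value v \<Longrightarrow> v (prod f S) = (\<Prod>i\<in>S. v (f i))"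
  by (induction S rule: infinite_finite_induct) (simp_all add: abs_value_1 abs_value_mult)

lemma abs_value_diff_ge: "abs_value v \<Longrightarrow> v x - v y \<le> v (x - y)"
  using abs_value_triangle[of v "x - y" y] by simp

lemma abs_value_sum_le: "abs_value v \<Longrightarrow> v (sum f S) \<le> (\<Sum>i\<in>S. v (f i))"
proof (induction S rule: infinite_finite_induct)
  case (insert x F)
  then show ?case using abs_value_triangle[of v "f x" "sum f F"] by simp
qed (simp_all add: abs_value_0)

lemma abs_value_sum_le_bound:
  assumes "abs_value v" "non_archimedean v" "\<And>i. i \<in> S \<Longrightarrow> v (f i) \<le> M" "0 \<le> M"
  shows "v (sum f S) \<le> M"
  using assms(3)
proof (induction S rule: infinite_finite_induct)
  case (insert x F)
  then have "v (sum f (insert x F)) \<le> max (v (f x)) (v (sum f F))"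
    using assms(2) unfolding non_archimedean_def by simp
  also have "\<dots> \<le> M" using insert by simp
  finally show ?case .
qed (simp_all add: abs_value_0 assms)

lemma alg_closed_field_infinite:
  assumes "alg_closed_field TYPE('a::field)" shows "infinite (UNIV :: 'a set)"
proof
  assume fin: "finite (UNIV :: 'a set)"
  define q :: "'a poly" where "q = (\<Prod>a\<in>UNIV. [:- a, 1:]) + 1"
  have "degree (\<Prod>a\<in>(UNIV :: 'a set). [:- a, 1:]) = card (UNIV :: 'a set)"
    by (subst degree_prod_eq_sum_degree) auto
  moreover have "card (UNIV :: 'a set) > 0" using fin by (simp add: card_gt_0_iff)
  ultimately have "0 < degree q" unfolding q_def by (subst degree_add_eq_left) simp_all
  then obtain x where "poly q x = 0" using assms unfolding alg_closed_field_def by blast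
  moreover have "poly (\<Prod>a\<in>(UNIV :: 'a set). [:- a, 1:]) x = 0"
    unfolding poly_prod using fin by (intro prod_zero) auto
  ultimately show False unfolding q_def by simp
qed

lemma poly_all_0_imp_0_infinite:
  fixes p :: "'a::idom poly"
  assumes "infinite (UNIV :: 'a set)" "\<And>x. poly p x = 0"
  shows "p = 0"
  using poly_roots_finite[of p] assms by auto

lemma abs_value_monomial_le:
  assumes "abs_value v" "i \<le> d"
  shows "v (a * y ^ i) \<le> v a * max 1 (v y) ^ d"
proof -
  have "v y ^ i \<le> max 1 (v y) ^ i" by (intro power_mono) (simp_all add: abs_value_nonneg assms(1))
  also have "\<dots> \<le> max 1 (v y) ^ d" using assms(2) by (intro power_increasing) auto
  finally show ?thesis
    by (simp add: abs_value_mult abs_value_power abs_value_nonneg assms(1) mult_left_mono)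
qed

lemma poly_as_sum_upto:
  fixes p :: "'a::comm_semiring_1 poly"
  shows "degree p \<le> d \<Longrightarrow> poly p y = (\<Sum>i\<le>d. coeff p i * y ^ i)"
  unfolding poly_altdef by (rule sum.mono_neutral_left) (auto simp: coeff_eq_0)

lemma abs_value_poly_le_sum:
  assumes "abs_value v" "degree p \<le> d"
  shows "v (poly p y) \<le> (\<Sum>i\<le>d. v (coeff p i)) * max 1 (v y) ^ d"
proof -
  have "v (poly p y) \<le> (\<Sum>i\<le>d. v (coeff p i * y ^ i))"
    unfolding poly_as_sum_upto[OF assms(2)] by (rule abs_value_sum_le[OF assms(1)])
  also have "\<dots> \<le> (\<Sum>i\<le>d. v (coeff p i) * max 1 (v y) ^ d)"
    by (intro sum_mono abs_value_monomial_le[OF assms(1)]) simp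
  finally show ?thesis by (simp add: sum_distrib_right)
qed

lemma abs_value_poly_le_Max:
  assumes "abs_value v" "non_archimedean v" "degree p \<le> d"
  shows "v (poly p y) \<le> Max ((\<lambda>i. v (coeff p i)) ` {..d}) * max 1 (v y) ^ d"
  unfolding poly_as_sum_upto[OF assms(3)]
proof (rule abs_value_sum_le_bound[OF assms(1,2)])
  let ?M = "Max ((\<lambda>i. v (coeff p i)) ` {..d})"
  have "0 \<le> v (coeff p 0)" by (rule abs_value_nonneg[OF assms(1)])
  also have "\<dots> \<le> ?M" by (intro Max_ge) auto
  finally show "0 \<le> ?M * max 1 (v y) ^ d" by simp
  fix i assume "i \<in> {..d}"
  then have "v (coeff p i * y ^ i) \<le> v (coeff p i) * max 1 (v y) ^ d"
    by (intro abs_value_monomial_le[OF assms(1)]) simp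
  also have "\<dots> \<le> ?M * max 1 (v y) ^ d"
    using \<open>i \<in> {..d}\<close> by (intro mult_right_mono Max_ge) auto
  finally show "v (coeff p i * y ^ i) \<le> ?M * max 1 (v y) ^ d" .
qed

lemma loc_height_le_of_le:
  assumes "1 \<le> C" "v w \<le> C * max 1 (v y) ^ d"
  shows "loc_height v w \<le> real d * loc_height v y + ln C"
proof -
  have "1 * 1 \<le> C * max 1 (v y) ^ d" using assms(1) by (intro mult_mono) auto
  then have "max 1 (v w) \<le> C * max 1 (v y) ^ d" using assms(2) by simp
  then have "ln (max 1 (v w)) \<le> ln (C * max 1 (v y) ^ d)" by simp
  also have "\<dots> = ln C + ln (max 1 (v y) ^ d)" using assms(1) by (simp add: ln_mult)
  finally show ?thesis by (simp add: loc_height_def ln_realpow)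
qed

lemma loc_height_ge_of_le:
  assumes "1 \<le> c" "max 1 (v y) ^ d \<le> c ^ d * max 1 (v w)"
  shows "real d * loc_height v y - real d * ln c \<le> loc_height v w"
proof -
  have "ln (max 1 (v y) ^ d) \<le> ln (c ^ d * max 1 (v w))" using assms by simp
  also have "\<dots> = ln (c ^ d) + ln (max 1 (v w))" using assms(1) by (simp add: ln_mult)
  finally show ?thesis using assms(1) by (simp add: loc_height_def ln_realpow)
qed

lemma abs_value_dist_root_ge:
  assumes "abs_value v" "v b \<le> A" "0 \<le> A" "0 \<le> B" "B \<le> c" "c < v y"
    and "if non_archimedean v then A \<le> c else A + B \<le> c"
  shows "B * v y \<le> c * v (y - b)"
proof (cases "non_archimedean v")
  case True
  then have "v y \<le> max (v (y - b)) (v b)"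
    unfolding non_archimedean_def by (metis diff_add_cancel)
  then have "v y \<le> v (y - b)" using assms(2,6,7) True by auto
  then show ?thesis
    using assms(4,5,6) abs_value_nonneg[OF assms(1), of y] by (intro mult_mono) auto
next
  case False
  have "B * v y \<le> c * (v y - A)"
  proof -
    have "0 \<le> (c - B - A) * v y" using assms(6,7) False abs_value_nonneg[OF assms(1), of y] by simp
    moreover have "0 \<le> A * (v y - c)" using assms(3,6) by simp
    ultimately show ?thesis by (simp add: algebra_simps)
  qed
  also have "\<dots> \<le> c * v (y - b)"
    using abs_value_diff_ge[OF assms(1), of y b] assms(2,4,5) by (intro mult_left_mono) auto
  finally show ?thesis .
qed

lemma abs_value_factored_poly_ge:
  assumes "abs_value v" "v a * B ^ d = 1" "0 < B" "\<And>i. i < d \<Longrightarrow> v (\<beta> i) \<le> A" "0 \<le> A"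
    and "1 \<le> c" "B \<le> c" "if non_archimedean v then A \<le> c else A + B \<le> c"
  shows "max 1 (v y) ^ d \<le> c ^ d * max 1 (v (a * (\<Prod>i<d. y - \<beta> i)))"
proof (cases "v y \<le> c")
  case True
  then have "max 1 (v y) ^ d \<le> c ^ d * 1" using assms(6) by (simp add: power_mono)
  also have "\<dots> \<le> c ^ d * max 1 (v (a * (\<Prod>i<d. y - \<beta> i)))"
    using assms(6) by (intro mult_left_mono) auto
  finally show ?thesis .
next
  case False
  have "B * v y \<le> c * v (y - \<beta> i)" if "i < d" for i
    using abs_value_dist_root_ge[OF assms(1) assms(4)[OF that] assms(5) _ assms(7)] assms(3,8) False
    by simp
  then have "(\<Prod>i<d. B * v y) \<le> (\<Prod>i<d. c * v (y - \<beta> i))"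
    using assms(3) by (intro prod_mono) (simp add: abs_value_nonneg assms(1))
  then have roots: "(B * v y) ^ d \<le> c ^ d * (\<Prod>i<d. v (y - \<beta> i))" by (simp add: prod.distrib)
  have "max 1 (v y) ^ d = v a * (B * v y) ^ d"
    using False assms(2,6) by (simp add: power_mult_distrib)
  also have "\<dots> \<le> c ^ d * v (a * (\<Prod>i<d. y - \<beta> i))"
    using roots abs_value_nonneg[OF assms(1), of a]
    by (simp add: abs_value_mult abs_value_prod assms(1) mult_left_mono mult.left_commute)
  also have "\<dots> \<le> c ^ d * max 1 (v (a * (\<Prod>i<d. y - \<beta> i)))"
    using assms(6) by (intro mult_left_mono) auto
  finally show ?thesis .
qed

lemma loc_height_poly_le:
  assumes "abs_value v" "degree p \<le> d"
  shows "loc_height v (poly p z) \<le> real d * loc_height v z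
    + ln (if non_archimedean v then max 1 (Max ((\<lambda>i. v (coeff p i)) ` {..d}))
          else max 1 (\<Sum>i\<le>d. v (coeff p i)))"
proof -
  define M where "M = (if non_archimedean v then Max ((\<lambda>i. v (coeff p i)) ` {..d})
    else (\<Sum>i\<le>d. v (coeff p i)))"
  have "v (poly p z) \<le> M * max 1 (v z) ^ d"
    unfolding M_def using abs_value_poly_le_Max[OF assms(1) _ assms(2)] abs_value_poly_le_sum[OF assms]
    by simp
  also have "\<dots> \<le> max 1 M * max 1 (v z) ^ d" by (intro mult_right_mono) simp_all
  finally have "loc_height v (poly p z) \<le> real d * loc_height v z + ln (max 1 M)"
    by (intro loc_height_le_of_le) simp_all
  then show ?thesis unfolding M_def by (cases "non_archimedean v") simp_all
qed

lemma powr_neg_inverse_power: "0 < x \<Longrightarrow> 0 < n \<Longrightarrow> x * (x powr (- 1 / real n)) ^ n = 1"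
  by (simp add: powr_realpow[symmetric] powr_powr powr_neg_one)

lemma loc_height_factored_poly_ge:
  assumes "abs_value v" "a \<noteq> 0" "0 < d"
  shows "let A = Max ((\<lambda>i. v (\<beta> i)) ` {..<d}); B = v a powr (- 1 / real d);
             c = (if non_archimedean v then max 1 (max A B) else max 1 (A + B))
         in real d * loc_height v z - real d * ln c \<le> loc_height v (a * (\<Prod>i<d. z - \<beta> i))"
proof -
  let ?A = "Max ((\<lambda>i. v (\<beta> i)) ` {..<d})"
  have root_bound: "v (\<beta> i) \<le> ?A" if "i < d" for i using that by (intro Max_ge) auto
  then have "0 \<le> ?A" using abs_value_nonneg[OF assms(1), of "\<beta> 0"] assms(3) by (meson order_trans)
  moreover have "v a * (v a powr (- 1 / real d)) ^ d = 1"
    by (rule powr_neg_inverse_power[OF abs_value_pos[OF assms(1,2)] assms(3)])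
  ultimately show ?thesis
    unfolding Let_def using abs_value_pos[OF assms(1,2)] root_bound
    by (intro loc_height_ge_of_le abs_value_factored_poly_ge[OF assms(1), where B = "v a powr (- 1 / real d)"])
      auto
qed

lemma sums_divide_power_Suc:
  fixes c d :: real
  assumes "1 < d"
  shows "(\<lambda>k. c / d ^ Suc k) sums (c / (d - 1))"
proof -
  have "(\<lambda>k. (1 / d) ^ k) sums (1 / (1 - 1 / d))" using assms by (intro geometric_sums) simp
  then have "(\<lambda>k. c / d * (1 / d) ^ k) sums (c / d * (1 / (1 - 1 / d)))" by (rule sums_mult)
  moreover have "(\<lambda>k. c / d * (1 / d) ^ k) = (\<lambda>k. c / d ^ Suc k)" by (simp add: power_divide)
  moreover have "c / d * (1 / (1 - 1 / d)) = c / (d - 1)" using assms by (simp add: field_simps)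
  ultimately show ?thesis by (simp only:)
qed

lemma scaled_iterate_limit_bounds:
  fixes g :: "'a \<Rightarrow> 'a" and h :: "'a \<Rightarrow> real" and a b d :: real
  assumes d: "1 < d" and lower: "\<And>y. d * h y - a \<le> h (g y)" and upper: "\<And>y. h (g y) \<le> d * h y + b"
  obtains L where "(\<lambda>n. h ((g ^^ n) y) / d ^ n) \<longlonglongrightarrow> L"
    and "- a / (d - 1) \<le> L - h y" and "L - h y \<le> b / (d - 1)"
proof -
  define e where "e k = (h ((g ^^ Suc k) y) - d * h ((g ^^ k) y)) / d ^ Suc k" for k
  have telescope: "h ((g ^^ n) y) / d ^ n = h y + (\<Sum>k<n. e k)" for n
  proof (induction n)
    case (Suc n)
    have "h ((g ^^ Suc n) y) / d ^ Suc n = h ((g ^^ n) y) / d ^ n + e n"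
      using d unfolding e_def by (simp add: field_simps)
    then show ?case using Suc by simp
  qed simp
  have e_bounds: "- a / d ^ Suc k \<le> e k \<and> e k \<le> b / d ^ Suc k" for k
    unfolding e_def using lower[of "(g ^^ k) y"] upper[of "(g ^^ k) y"] d
    by (intro conjI divide_right_mono) auto
  have "summable e"
  proof (rule summable_comparison_test)
    show "summable (\<lambda>k. (\<bar>a\<bar> + \<bar>b\<bar>) / d ^ Suc k)"
      using sums_divide_power_Suc[OF d] sums_summable by blast
    have "\<bar>e k\<bar> \<le> (\<bar>a\<bar> + \<bar>b\<bar>) / d ^ Suc k" for k
    proof -
      have "\<bar>e k\<bar> = \<bar>h ((g ^^ Suc k) y) - d * h ((g ^^ k) y)\<bar> / d ^ Suc k"
        using d unfolding e_def by (simp add: abs_divide)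
      also have "\<dots> \<le> (\<bar>a\<bar> + \<bar>b\<bar>) / d ^ Suc k"
        using lower[of "(g ^^ k) y"] upper[of "(g ^^ k) y"] d by (intro divide_right_mono) auto
      finally show ?thesis .
    qed
    then show "\<exists>N. \<forall>n\<ge>N. norm (e n) \<le> (\<bar>a\<bar> + \<bar>b\<bar>) / d ^ Suc n" by auto
  qed
  show ?thesis
  proof
    show "(\<lambda>n. h ((g ^^ n) y) / d ^ n) \<longlonglongrightarrow> h y + suminf e"
      unfolding telescope by (intro tendsto_add tendsto_const summable_LIMSEQ \<open>summable e\<close>)
    have "- (a / (d - 1)) \<le> suminf e"
      using sums_le[OF _ sums_minus[OF sums_divide_power_Suc[OF d]] summable_sums[OF \<open>summable e\<close>]]
        e_bounds by auto
    then show "- a / (d - 1) \<le> h y + suminf e - h y" by simp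
    show "h y + suminf e - h y \<le> b / (d - 1)"
      using sums_le[OF _ summable_sums[OF \<open>summable e\<close>] sums_divide_power_Suc[OF d]] e_bounds by auto
  qed
qed

lemma LIMSEQ_divide_power_bounded_diff:
  fixes f g :: "nat \<Rightarrow> real"
  assumes "1 < d" "\<And>n. \<bar>f n - g n\<bar> \<le> K" "(\<lambda>n. g n / d ^ n) \<longlonglongrightarrow> L"
  shows "(\<lambda>n. f n / d ^ n) \<longlonglongrightarrow> L"
proof -
  have "(\<lambda>n. (f n - g n) / d ^ n) \<longlonglongrightarrow> 0"
  proof (rule tendsto_sandwich[of "\<lambda>n. - K / d ^ n" _ _ "\<lambda>n. K / d ^ n"])
    have "- K / d ^ n \<le> (f n - g n) / d ^ n \<and> (f n - g n) / d ^ n \<le> K / d ^ n" for n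
      using assms(1) assms(2)[of n] by (intro conjI divide_right_mono) auto
    then show "\<forall>\<^sub>F n in sequentially. - K / d ^ n \<le> (f n - g n) / d ^ n"
      "\<forall>\<^sub>F n in sequentially. (f n - g n) / d ^ n \<le> K / d ^ n" by simp_all
  qed (use LIMSEQ_divide_realpow_zero[OF assms(1)] tendsto_minus[OF LIMSEQ_divide_realpow_zero[OF assms(1)]]
      in auto)
  from tendsto_add[OF assms(3) this] show ?thesis by (simp add: diff_divide_distrib)
qed

lemma loc_height_nonneg: "0 \<le> loc_height v x"
  by (simp add: loc_height_def)

lemma loc_height_mult_le:
  assumes "abs_value v"
  shows "loc_height v (x * y) \<le> loc_height v x + loc_height v y"
proof -
  have "v (x * y) \<le> max 1 (v x) * max 1 (v y)"
    using abs_value_nonneg[OF assms] by (auto simp: abs_value_mult[OF assms] intro: mult_mono)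
  moreover have "1 * 1 \<le> max 1 (v x) * max 1 (v y)" by (intro mult_mono) auto
  ultimately have "max 1 (v (x * y)) \<le> max 1 (v x) * max 1 (v y)" by simp
  then have "ln (max 1 (v (x * y))) \<le> ln (max 1 (v x) * max 1 (v y))" by simp
  also have "\<dots> = ln (max 1 (v x)) + ln (max 1 (v y))" by (simp add: ln_mult)
  finally show ?thesis by (simp add: loc_height_def)
qed

lemma canon_height_minus_loc_height_bounds:
  assumes "abs_value v" "\<gamma> \<noteq> 0" "2 \<le> degree \<phi>"
    and lower: "\<And>y. real (degree \<phi>) * loc_height v (\<gamma> * y) - a \<le> loc_height v (\<gamma> * poly \<phi> y)"
    and upper: "\<And>y. loc_height v (\<gamma> * poly \<phi> y) \<le> real (degree \<phi>) * loc_height v (\<gamma> * y) + b"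
  shows "- a / (real (degree \<phi>) - 1) \<le> canon_height v \<phi> x - loc_height v (\<gamma> * x)
    \<and> canon_height v \<phi> x - loc_height v (\<gamma> * x) \<le> b / (real (degree \<phi>) - 1)"
proof -
  let ?d = "real (degree \<phi>)" and ?h = "\<lambda>y. loc_height v (\<gamma> * y)"
  have d: "1 < ?d" using assms(3) by simp
  obtain L where L: "(\<lambda>n. ?h ((poly \<phi> ^^ n) x) / ?d ^ n) \<longlonglongrightarrow> L"
    and bounds: "- a / (?d - 1) \<le> L - ?h x" "L - ?h x \<le> b / (?d - 1)"
    using scaled_iterate_limit_bounds[of ?d ?h a "poly \<phi>" b, OF d lower upper] by blast
  have "\<bar>loc_height v y - ?h y\<bar> \<le> loc_height v (inverse \<gamma>) + loc_height v \<gamma>" for y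
  proof -
    have "loc_height v y \<le> loc_height v (inverse \<gamma>) + ?h y"
      using loc_height_mult_le[OF assms(1), of "inverse \<gamma>" "\<gamma> * y"] assms(2)
      by (simp add: mult.assoc[symmetric])
    moreover have "?h y \<le> loc_height v \<gamma> + loc_height v y" by (rule loc_height_mult_le[OF assms(1)])
    ultimately show ?thesis using loc_height_nonneg[of v \<gamma>] loc_height_nonneg[of v "inverse \<gamma>"]
      by linarith
  qed
  then have "(\<lambda>n. loc_height v ((poly \<phi> ^^ n) x) / ?d ^ n) \<longlonglongrightarrow> L"
    by (rule LIMSEQ_divide_power_bounded_diff[OF d _ L])
  then have "canon_height v \<phi> x = L" unfolding canon_height_def by (rule limI)
  with bounds show ?thesis by simp
qed

theorem corollary2p6:
  fixes K :: "'a::field set" and v :: "'a \<Rightarrow> real"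
    and \<phi> \<psi> :: "'a poly" and \<gamma> :: 'a and \<beta> :: "nat \<Rightarrow> 'a" and d :: nat
  assumes "completion_of_alg_closure K v"
    and "\<forall>i. coeff \<phi> i \<in> K"
    and "degree \<phi> = d" and "d \<ge> 2"
    and "\<gamma> \<noteq> 0"
    and "\<forall>z. poly \<psi> z = \<gamma> * poly \<phi> (inverse \<gamma> * z)"
    and "\<psi> = smult (coeff \<psi> d) (\<Prod>i<d. [:- \<beta> i, 1:])"
  shows "let A = Max ((\<lambda>i. v (\<beta> i)) ` {..<d});
             B = v (coeff \<psi> d) powr (- 1 / real d);
             c = (if non_archimedean v then max 1 (max A B) else max 1 (A + B));
             C = (if non_archimedean v then max 1 (Max ((\<lambda>i. v (coeff \<psi> i)) ` {..d}))
                  else max 1 (\<Sum>i\<le>d. v (coeff \<psi> i)))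
         in \<forall>x. - real d * ln c / (real d - 1) \<le> canon_height v \<phi> x - loc_height v (\<gamma> * x)
              \<and> canon_height v \<phi> x - loc_height v (\<gamma> * x) \<le> ln C / (real d - 1)"
proof -
  have v: "abs_value v" and closed: "alg_closed_field TYPE('a)"
    using assms(1) unfolding completion_of_alg_closure_def by simp_all
  have psi_phi: "poly \<psi> (\<gamma> * y) = \<gamma> * poly \<phi> y" for y
    using assms(5,6) by (simp add: mult.assoc[symmetric])
  have "\<psi> \<noteq> 0"
  proof
    assume "\<psi> = 0"
    then have "poly \<phi> y = 0" for y using psi_phi[of y] assms(5) by simp
    then have "\<phi> = 0" by (rule poly_all_0_imp_0_infinite[OF alg_closed_field_infinite[OF closed]])
    with assms(3,4) show False by simp
  qed
  then have lead: "coeff \<psi> d \<noteq> 0" using assms(7) by auto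
  have factored: "poly \<psi> z = coeff \<psi> d * (\<Prod>i<d. z - \<beta> i)" for z
    by (subst assms(7)) (simp add: poly_prod)
  have "degree (\<Prod>i<d. [:- \<beta> i, 1:]) \<le> d"
    using degree_prod_sum_le[of "{..<d}" "\<lambda>i. [:- \<beta> i, 1:]"] by simp
  then have "degree \<psi> \<le> d" by (subst assms(7)) (rule order_trans[OF degree_smult_le])
  have "0 < d" using assms(4) by simp
  note upper = loc_height_poly_le[OF v \<open>degree \<psi> \<le> d\<close>, of "\<gamma> * y" for y, unfolded psi_phi]
  note lower = loc_height_factored_poly_ge[OF v lead \<open>0 < d\<close>, of \<beta> "\<gamma> * y" for y,
      unfolded Let_def factored[symmetric] psi_phi]
  show ?thesis
    unfolding Let_def
    using canon_height_minus_loc_height_bounds[OF v assms(5), of \<phi>, unfolded assms(3), OF assms(4) lower upper]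
    by simp
qed

end
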